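(* Let a quantum circuit with input-node set $I$ be given, together with an input state vector $|\psi\rangle\in Q^{\otimes I}$. Then there is a unique function assigning to each stage $Z$ of the circuit a vector $C(|\psi\rangle,Z)\in Q^{\otimes\mathrm{Exit}(Z)}$ such that: (1) $C(|\psi\rangle,\emptyset)=|\psi\rangle$ (note $\mathrm{Exit}(\emptyset)=I$); (2) whenever $G$ is a gate ready at a stage $Z$, $$C(|\psi\rangle,Z+G)=(I_R\otimes U_G)\,C(|\psi\rangle,Z),$$ where $R=\mathrm{Exit}(Z)\setminus\pi(G)$, $I_R$ is the identity operator on $Q^{\otimes R}$, and $Q^{\otimes\mathrm{Exit}(Z)}$ and $Q^{\otimes\mathrm{Exit}(Z+G)}$ are identified with $Q^{\otimes R}\otimes Q^{\otimes\iota_G}$ and $Q^{\otimes R}\otimes Q^{\otimes o_G}$ respectively as described in the context.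
   Context: $Q=\mathbb{C}^2$; for a finite set $S$, $Q^{\otimes S}$ is the tensor product of $S$-indexed copies of $Q$; a bijection $S\to S'$ induces a canonical isomorphism $Q^{\otimes S}\cong Q^{\otimes S'}$, and for disjoint $S,T$ one has canonically $Q^{\otimes(S\sqcup T)}\cong Q^{\otimes S}\otimes Q^{\otimes T}$. A quantum circuit consists of a finite set $I$ of input nodes, a finite set $O$ of output nodes, a finite set of gates, an assignment to each gate $G$ of a triple $(\iota_G,o_G,U_G)$ with $\iota_G,o_G$ finite sets and $U_G:Q^{\otimes\iota_G}\to Q^{\otimes o_G}$ unitary, and a bijective provider function $\pi$ from consumers to producers. Producers are the input nodes and output ports $(G,\mathrm{out},l)$, $l\in o_G$; consumers are output nodes and input ports $(G,\mathrm{in},l)$, $l\in\iota_G$ (all pairwise distinct). The relation $G\prec H$ on gates (iff $\pi$ maps some input port of $H$ to an output port of $G$) is required to be acyclic. For a gate $H$, $\pi(H)=\{\pi(H,\mathrm{in},l):l\in\iota_H\}$. A stage is a set $Z$ of gates such that $H\in Z$ and $H'\prec H$ imply $H'\in Z$. $\mathrm{Exit}(Z)$ is the set of producers that are input nodes or output ports of gates in $Z$ and that lie in no $\pi(H)$ with $H\in Z$. A gate $G\notin Z$ is ready at $Z$ if every $H\prec G$ lies in $Z$; then $Z+G:=Z\cup\{G\}$. If $G$ is ready at $Z$ and $R=\mathrm{Exit}(Z)\setminus\pi(G)$, then $\mathrm{Exit}(Z)=R\sqcup\pi(G)$ and $\mathrm{Exit}(Z+G)=R\sqcup\{(G,\mathrm{out},m):m\in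 o_G\}$; using the bijections $l\mapsto\pi(G,\mathrm{in},l)$ ($l\in\iota_G$) and $m\mapsto(G,\mathrm{out},m)$ ($m\in o_G$), one identifies $Q^{\otimes\mathrm{Exit}(Z)}$ with $Q^{\otimes R}\otimes Q^{\otimes\iota_G}$ and $Q^{\otimes\mathrm{Exit}(Z+G)}$ with $Q^{\otimes R}\otimes Q^{\otimes o_G}$. *)

theory Defs
  imports Complex_Main
begin

datatype ('n,'g,'l) producer = InNode 'n | OutPort 'g 'l
datatype ('n,'g,'l) consumer = OutNode 'n | InPort 'g 'l

text \<open>Computational basis of Q^{\<otimes>S}: assignments S \<rightarrow> {0,1} (False outside S).
  A vector of Q^{\<otimes>S} is a complex function on these basis states (zero elsewhere).\<close>

definition qbasis :: "'a set \<Rightarrow> ('a \<Rightarrow> bool) set" where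
  "qbasis S = {b. \<forall>x. x \<notin> S \<longrightarrow> \<not> b x}"

definition qvec :: "'a set \<Rightarrow> (('a \<Rightarrow> bool) \<Rightarrow> complex) set" where
  "qvec S = {v. \<forall>b. b \<notin> qbasis S \<longrightarrow> v b = 0}"

text \<open>A linear map Q^{\<otimes>A} \<rightarrow> Q^{\<otimes>B} is given by its matrix M c b
  (c output basis state, b input basis state); unitarity means M* M = I and M M* = I.\<close>

definition unitary_mat :: "'a set \<Rightarrow> 'a set \<Rightarrow> (('a \<Rightarrow> bool) \<Rightarrow> ('a \<Rightarrow> bool) \<Rightarrow> complex) \<Rightarrow> bool" where
  "unitary_mat A B M \<longleftrightarrow>
     (\<forall>b\<in>qbasis A. \<forall>b'\<in>qbasis A.
        (\<Sum>c\<in>qbasis B. cnj (M c b) * M c b') = (if b = b' then 1 else 0)) \<and>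
     (\<forall>c\<in>qbasis B. \<forall>c'\<in>qbasis B.
        (\<Sum>b\<in>qbasis A. M c b * cnj (M c' b)) = (if c = c' then 1 else 0))"

record ('n,'g,'l) circuit =
  inputs  :: "'n set"
  outputs :: "'n set"
  gates   :: "'g set"
  iota    :: "'g \<Rightarrow> 'l set"
  outp    :: "'g \<Rightarrow> 'l set"
  gateU   :: "'g \<Rightarrow> ('l \<Rightarrow> bool) \<Rightarrow> ('l \<Rightarrow> bool) \<Rightarrow> complex"
  prov    :: "('n,'g,'l) consumer \<Rightarrow> ('n,'g,'l) producer"

definition producers :: "('n,'g,'l,'z) circuit_scheme \<Rightarrow> ('n,'g,'l) producer set" where
  "producers C = InNode ` inputs C \<union> {OutPort G l | G l. G \<in> gates C \<and> l \<in> outp C G}"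

definition consumers :: "('n,'g,'l,'z) circuit_scheme \<Rightarrow> ('n,'g,'l) consumer set" where
  "consumers C = OutNode ` outputs C \<union> {InPort G l | G l. G \<in> gates C \<and> l \<in> iota C G}"

definition gprec :: "('n,'g,'l,'z) circuit_scheme \<Rightarrow> 'g \<Rightarrow> 'g \<Rightarrow> bool" where
  "gprec C G H \<longleftrightarrow> G \<in> gates C \<and> H \<in> gates C \<and>
     (\<exists>l\<in>iota C H. \<exists>m. prov C (InPort H l) = OutPort G m)"

definition circuit :: "('n,'g,'l,'z) circuit_scheme \<Rightarrow> bool" where
  "circuit C \<longleftrightarrow>
     finite (inputs C) \<and> finite (outputs C) \<and> finite (gates C) \<and>
     (\<forall>G\<in>gates C. finite (iota C G) \<and> finite (outp C G) \<and>
        unitary_mat (iota C G) (outp C G) (gateU C G)) \<and>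
     bij_betw (prov C) (consumers C) (producers C) \<and>
     acyclic {(G, H). gprec C G H}"

definition provset :: "('n,'g,'l,'z) circuit_scheme \<Rightarrow> 'g \<Rightarrow> ('n,'g,'l) producer set" where
  "provset C H = {prov C (InPort H l) | l. l \<in> iota C H}"

definition stage :: "('n,'g,'l,'z) circuit_scheme \<Rightarrow> 'g set \<Rightarrow> bool" where
  "stage C Z \<longleftrightarrow> Z \<subseteq> gates C \<and> (\<forall>H H'. H \<in> Z \<longrightarrow> gprec C H' H \<longrightarrow> H' \<in> Z)"

definition Exit :: "('n,'g,'l,'z) circuit_scheme \<Rightarrow> 'g set \<Rightarrow> ('n,'g,'l) producer set" where
  "Exit C Z = {p. (p \<in> InNode ` inputs C \<or> (\<exists>G\<in>Z. \<exists>m\<in>outp C G. p = OutPort G m)) \<and>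
                  (\<forall>H\<in>Z. p \<notin> provset C H)}"

definition ready :: "('n,'g,'l,'z) circuit_scheme \<Rightarrow> 'g set \<Rightarrow> 'g \<Rightarrow> bool" where
  "ready C Z G \<longleftrightarrow> G \<in> gates C \<and> G \<notin> Z \<and> (\<forall>H. gprec C H G \<longrightarrow> H \<in> Z)"

text \<open>Canonical identification of Q^{\<otimes>I} with Q^{\<otimes>Exit(\<emptyset>)} via n \<mapsto> InNode n.\<close>
definition embed_input :: "('n,'g,'l,'z) circuit_scheme \<Rightarrow> (('n \<Rightarrow> bool) \<Rightarrow> complex)
    \<Rightarrow> (('n,'g,'l) producer \<Rightarrow> bool) \<Rightarrow> complex" where
  "embed_input C \<psi> = (\<lambda>c. if c \<in> qbasis (InNode ` inputs C) then \<psi> (\<lambda>n. c (InNode n)) else 0)"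

text \<open>Given a basis state c of Exit(Z+G) and a basis state b of Q^{\<otimes>\<iota>_G}, the basis state
  of Exit(Z) = R \<sqcup> \<pi>(G) agreeing with c on R and with b on \<pi>(G) (via l \<mapsto> \<pi>(G,in,l)).\<close>
definition glue_in :: "('n,'g,'l,'z) circuit_scheme \<Rightarrow> 'g set \<Rightarrow> 'g
    \<Rightarrow> (('n,'g,'l) producer \<Rightarrow> bool) \<Rightarrow> ('l \<Rightarrow> bool) \<Rightarrow> ('n,'g,'l) producer \<Rightarrow> bool" where
  "glue_in C Z G c b = (\<lambda>p.
     if p \<in> Exit C Z - provset C G then c p
     else if (\<exists>l\<in>iota C G. p = prov C (InPort G l))
       then b (SOME l. l \<in> iota C G \<and> p = prov C (InPort G l))
     else False)"

definition out_part :: "('n,'g,'l,'z) circuit_scheme \<Rightarrow> 'g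
    \<Rightarrow> (('n,'g,'l) producer \<Rightarrow> bool) \<Rightarrow> 'l \<Rightarrow> bool" where
  "out_part C G c = (\<lambda>m. if m \<in> outp C G then c (OutPort G m) else False)"

text \<open>(I_R \<otimes> U_G) under the identifications of the context.\<close>
definition apply_gate :: "('n,'g,'l,'z) circuit_scheme \<Rightarrow> 'g set \<Rightarrow> 'g
    \<Rightarrow> ((('n,'g,'l) producer \<Rightarrow> bool) \<Rightarrow> complex)
    \<Rightarrow> ((('n,'g,'l) producer \<Rightarrow> bool) \<Rightarrow> complex)" where
  "apply_gate C Z G v = (\<lambda>c.
     if c \<in> qbasis (Exit C (insert G Z)) then
       (\<Sum>b\<in>qbasis (iota C G). gateU C G (out_part C G c) b * v (glue_in C Z G c b))
     else 0)"

end

theory Submission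
  imports Defs
begin

text \<open>The state at a stage Z is given in closed form as a path sum over the computational basis:
  the amplitude of a basis state c of Exit(Z) is the sum, over all classical values a of the wires
  produced so far (the input nodes and the output ports of the gates in Z) that agree with c on
  Exit(Z), of \<psi>(a restricted to I) times the product over H \<in> Z of the matrix entries of U_H
  between the values of a on the output and on the input ports of H.  Applying a ready gate G makes
  the wires \<pi>(G) internal, and summing over their values against U_G is exactly I_R \<otimes> U_G.  Uniqueness holds because every nonempty stage contains a \<prec>-maximal
  gate, which is ready at the stage obtained by removing it.\<close>

lemma finite_qbasis: "finite S \<Longrightarrow> finite (qbasis S)"
  using finite_set_of_finite_funs[of S "UNIV :: bool set" False]
  by (simp add: qbasis_def)

definition qbasis_agree :: "'a set \<Rightarrow> 'a set \<Rightarrow> ('a \<Rightarrow> bool) \<Rightarrow> ('a \<Rightarrow> bool) set" where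
  "qbasis_agree S E c = {a \<in> qbasis S. \<forall>p\<in>E. a p = c p}"

lemma bij_betw_qbasis_agree_extend:
  assumes "D \<subseteq> W" "V \<inter> W = {}"
  shows "bij_betw (\<lambda>a p. if p \<in> V then c p else a p)
    (qbasis_agree W D c) (qbasis_agree (W \<union> V) (D \<union> V) c)"
  using assms
  by (intro bij_betw_byWitness[where f' = "\<lambda>a p. if p \<in> W then a p else False"])
    (auto simp: qbasis_agree_def qbasis_def fun_eq_iff)

lemma circuit_finite:
  assumes "circuit C"
  shows "finite (inputs C)" "finite (gates C)"
    and "G \<in> gates C \<Longrightarrow> finite (iota C G)" "G \<in> gates C \<Longrightarrow> finite (outp C G)"
  using assms by (auto simp: circuit_def)

lemma prov_InPort_inj:
  assumes "circuit C" "G \<in> gates C" "l \<in> iota C G" "H \<in> gates C" "l' \<in> iota C H"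
    and "prov C (InPort H l') = prov C (InPort G l)"
  shows "H = G \<and> l' = l"
proof -
  have "inj_on (prov C) (consumers C)"
    using assms(1) by (auto simp: circuit_def bij_betw_def)
  then show ?thesis
    using assms by (auto simp: consumers_def dest: inj_onD)
qed

lemma prov_InPort_source:
  assumes "circuit C" "G \<in> gates C" "l \<in> iota C G"
  shows "prov C (InPort G l) \<in> InNode ` inputs C \<or>
    (\<exists>G' m. prov C (InPort G l) = OutPort G' m \<and> gprec C G' G \<and> m \<in> outp C G')"
proof -
  have "prov C (InPort G l) \<in> producers C"
    using assms by (auto simp: circuit_def bij_betw_def consumers_def)
  then show ?thesis
    using assms by (auto simp: producers_def gprec_def)
qed

lemma gprec_irrefl: "circuit C \<Longrightarrow> \<not> gprec C G G"
  by (auto simp: circuit_def acyclic_def)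

lemma stage_induct [consumes 2, case_names empty ready]:
  assumes circuit: "circuit C" and "stage C Z"
    and base: "P {}"
    and step: "\<And>Z G. stage C Z \<Longrightarrow> ready C Z G \<Longrightarrow> P Z \<Longrightarrow> P (insert G Z)"
  shows "P Z"
proof -
  let ?r = "{(G, H). gprec C G H}"
  have "?r \<subseteq> gates C \<times> gates C"
    by (auto simp: gprec_def)
  then have "finite ?r"
    using circuit_finite(2)[OF circuit] by (meson finite_SigmaI finite_subset)
  moreover have "acyclic ?r"
    using circuit by (simp add: circuit_def)
  ultimately have "wf (?r\<inverse>)"
    by (rule finite_acyclic_wf_converse)
  have "Z \<subseteq> gates C"
    using \<open>stage C Z\<close> by (simp add: stage_def)
  then have "finite Z"
    using circuit_finite(2)[OF circuit] by (rule finite_subset)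
  then show ?thesis
    using \<open>stage C Z\<close>
  proof (induction Z rule: finite_remove_induct)
    case empty
    show ?case by (rule base)
  next
    case (remove Z)
    obtain G where "G \<in> Z" "\<And>H. (H, G) \<in> ?r\<inverse> \<Longrightarrow> H \<notin> Z"
      using wfE_min'[OF \<open>wf (?r\<inverse>)\<close> \<open>Z \<noteq> {}\<close>] by metis
    then have G: "G \<in> Z" "\<And>H. gprec C G H \<Longrightarrow> H \<notin> Z"
      by auto
    have stage': "stage C (Z - {G})"
      using remove.prems G unfolding stage_def by blast
    moreover have "ready C (Z - {G}) G"
      using remove.prems G gprec_irrefl[OF circuit] by (auto simp: ready_def stage_def)
    ultimately have "P (insert G (Z - {G}))"
      using remove.IH[OF G(1) stage'] by (rule step)
    then show ?case
      using G(1) by (simp add: insert_absorb)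
  qed
qed

definition wires :: "('n,'g,'l,'z) circuit_scheme \<Rightarrow> 'g set \<Rightarrow> ('n,'g,'l) producer set" where
  "wires C Z = InNode ` inputs C \<union> {OutPort H m | H m. H \<in> Z \<and> m \<in> outp C H}"

definition out_ports :: "('n,'g,'l,'z) circuit_scheme \<Rightarrow> 'g \<Rightarrow> ('n,'g,'l) producer set" where
  "out_ports C G = {OutPort G m | m. m \<in> outp C G}"

definition in_part :: "('n,'g,'l,'z) circuit_scheme \<Rightarrow> 'g
    \<Rightarrow> (('n,'g,'l) producer \<Rightarrow> bool) \<Rightarrow> 'l \<Rightarrow> bool" where
  "in_part C H a = (\<lambda>l. if l \<in> iota C H then a (prov C (InPort H l)) else False)"

definition path_amplitude :: "('n,'g,'l,'z) circuit_scheme \<Rightarrow> (('n \<Rightarrow> bool) \<Rightarrow> complex) \<Rightarrow> 'g set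
    \<Rightarrow> (('n,'g,'l) producer \<Rightarrow> bool) \<Rightarrow> complex" where
  "path_amplitude C \<psi> Z a =
     \<psi> (\<lambda>n. if n \<in> inputs C then a (InNode n) else False) *
     (\<Prod>H\<in>Z. gateU C H (out_part C H a) (in_part C H a))"

definition path_sum :: "('n,'g,'l,'z) circuit_scheme \<Rightarrow> (('n \<Rightarrow> bool) \<Rightarrow> complex) \<Rightarrow> 'g set
    \<Rightarrow> (('n,'g,'l) producer \<Rightarrow> bool) \<Rightarrow> complex" where
  "path_sum C \<psi> Z = (\<lambda>c.
     if c \<in> qbasis (Exit C Z)
     then \<Sum>a\<in>qbasis_agree (wires C Z) (Exit C Z) c. path_amplitude C \<psi> Z a
     else 0)"

lemma path_sum_qvec: "path_sum C \<psi> Z \<in> qvec (Exit C Z)"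
  by (simp add: path_sum_def qvec_def)

lemma finite_wires:
  assumes "circuit C" "Z \<subseteq> gates C"
  shows "finite (wires C Z)"
proof -
  have "wires C Z = InNode ` inputs C \<union> (\<Union>H\<in>Z. OutPort H ` outp C H)"
    by (auto simp: wires_def)
  moreover have "finite Z"
    using assms circuit_finite(2) finite_subset by blast
  ultimately show ?thesis
    using assms circuit_finite[OF assms(1)] by auto
qed

lemma wires_insert: "wires C (insert G Z) = wires C Z \<union> out_ports C G"
  by (auto simp: wires_def out_ports_def)

lemma Exit_subset_wires: "Exit C Z \<subseteq> wires C Z"
  by (auto simp: Exit_def wires_def)

lemma prov_InPort_in_wires:
  assumes "circuit C" "stage C Z" "H \<in> Z" "l \<in> iota C H"
  shows "prov C (InPort H l) \<in> wires C Z"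
proof -
  have "H \<in> gates C"
    using assms(2,3) by (auto simp: stage_def)
  then show ?thesis
    using prov_InPort_source[OF assms(1) _ assms(4)] assms(2,3)
    by (auto simp: wires_def stage_def)
qed

lemma path_amplitude_cong:
  assumes "circuit C" "stage C Z" and agree: "\<forall>p\<in>wires C Z. a p = a' p"
  shows "path_amplitude C \<psi> Z a = path_amplitude C \<psi> Z a'"
proof -
  have "(\<lambda>n. if n \<in> inputs C then a (InNode n) else False) =
        (\<lambda>n. if n \<in> inputs C then a' (InNode n) else False)"
    using agree by (auto simp: wires_def)
  moreover have "out_part C H a = out_part C H a'" "in_part C H a = in_part C H a'" if "H \<in> Z" for H
    using that agree prov_InPort_in_wires[OF assms(1,2) that]
    by (auto simp: out_part_def in_part_def wires_def fun_eq_iff)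
  then have "(\<Prod>H\<in>Z. gateU C H (out_part C H a) (in_part C H a)) =
             (\<Prod>H\<in>Z. gateU C H (out_part C H a') (in_part C H a'))"
    by (intro prod.cong) simp_all
  ultimately show ?thesis
    by (simp add: path_amplitude_def)
qed

lemma path_sum_empty: "path_sum C \<psi> {} = embed_input C \<psi>"
proof
  fix c
  have Exit_empty: "Exit C {} = InNode ` inputs C" and wires_empty: "wires C {} = InNode ` inputs C"
    by (auto simp: Exit_def wires_def)
  show "path_sum C \<psi> {} c = embed_input C \<psi> c"
  proof (cases "c \<in> qbasis (InNode ` inputs C)")
    case True
    have "a = c" if "a \<in> qbasis_agree (wires C {}) (Exit C {}) c" for a
    proof
      fix p
      show "a p = c p"
        using that True
        by (cases "p \<in> InNode ` inputs C") (auto simp: qbasis_agree_def qbasis_def Exit_empty wires_empty)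
    qed
    then have "qbasis_agree (wires C {}) (Exit C {}) c = {c}"
      using True by (auto simp: qbasis_agree_def Exit_empty wires_empty)
    moreover have "(\<lambda>n. if n \<in> inputs C then c (InNode n) else False) = (\<lambda>n. c (InNode n))"
      using True by (auto simp: qbasis_def)
    ultimately show ?thesis
      using True by (simp add: path_sum_def embed_input_def path_amplitude_def Exit_empty)
  qed (simp add: path_sum_def embed_input_def Exit_empty)
qed

lemma path_amplitude_insert:
  assumes "finite Z" "G \<notin> Z"
  shows "path_amplitude C \<psi> (insert G Z) a =
    gateU C G (out_part C G a) (in_part C G a) * path_amplitude C \<psi> Z a"
  using assms by (simp add: path_amplitude_def mult_ac)

context
  fixes C :: "('n,'g,'l) circuit" and Z :: "'g set" and G :: 'g
  assumes circuit: "circuit C" and stage: "stage C Z" and ready: "ready C Z G"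
begin

lemma ready_gate: "G \<in> gates C" "G \<notin> Z" "Z \<subseteq> gates C"
  using ready stage by (auto simp: ready_def stage_def)

lemma provset_subset_Exit: "provset C G \<subseteq> Exit C Z"
proof
  fix p
  assume "p \<in> provset C G"
  then obtain l where l: "l \<in> iota C G" "p = prov C (InPort G l)"
    by (auto simp: provset_def)
  have "p \<notin> provset C H" if "H \<in> Z" for H
  proof
    assume "p \<in> provset C H"
    then obtain l' where "l' \<in> iota C H" "prov C (InPort H l') = p"
      by (auto simp: provset_def)
    then have "H = G"
      using prov_InPort_inj[OF circuit ready_gate(1) l(1)] l(2) that ready_gate(3) by blast
    then show False
      using that ready_gate(2) by simp
  qed
  moreover have "p \<in> InNode ` inputs C \<or> (\<exists>G'\<in>Z. \<exists>m\<in>outp C G'. p = OutPort G' m)"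
    using prov_InPort_source[OF circuit ready_gate(1) l(1)] ready l(2)
    unfolding ready_def by blast
  ultimately show "p \<in> Exit C Z"
    unfolding Exit_def by blast
qed

lemma OutPort_not_consumed:
  assumes "H \<in> insert G Z"
  shows "OutPort G m \<notin> provset C H"
proof
  assume "OutPort G m \<in> provset C H"
  then obtain l where "l \<in> iota C H" "prov C (InPort H l) = OutPort G m"
    by (auto simp: provset_def)
  then have "gprec C G H"
    using assms ready_gate unfolding gprec_def by blast
  then show False
    using assms stage ready_gate gprec_irrefl[OF circuit] by (auto simp: stage_def)
qed

lemma Exit_insert_ready: "Exit C (insert G Z) = (Exit C Z - provset C G) \<union> out_ports C G"
proof (intro equalityI subsetI)
  fix p
  assume p: "p \<in> Exit C (insert G Z)"
  show "p \<in> (Exit C Z - provset C G) \<union> out_ports C G"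
  proof (cases "p \<in> out_ports C G")
    case False
    then have "p \<in> InNode ` inputs C \<or> (\<exists>H\<in>Z. \<exists>m\<in>outp C H. p = OutPort H m)"
      using p by (auto simp: Exit_def out_ports_def)
    then show ?thesis
      using p by (auto simp: Exit_def)
  qed simp
next
  fix p
  assume "p \<in> (Exit C Z - provset C G) \<union> out_ports C G"
  then show "p \<in> Exit C (insert G Z)"
    using OutPort_not_consumed by (auto simp: Exit_def out_ports_def)
qed

lemma out_ports_disjoint_wires: "out_ports C G \<inter> wires C Z = {}"
  using ready_gate by (auto simp: out_ports_def wires_def)

lemma glue_in_qbasis: "glue_in C Z G c b \<in> qbasis (Exit C Z)"
  using provset_subset_Exit by (auto simp: glue_in_def qbasis_def provset_def)

lemma glue_in_prov:
  assumes l: "l \<in> iota C G"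
  shows "glue_in C Z G c b (prov C (InPort G l)) = b l"
proof -
  have some: "(SOME l'. l' \<in> iota C G \<and> prov C (InPort G l) = prov C (InPort G l')) = l"
  proof (rule some_equality)
    fix l'
    assume "l' \<in> iota C G \<and> prov C (InPort G l) = prov C (InPort G l')"
    then show "l' = l"
      using prov_InPort_inj[OF circuit ready_gate(1) l ready_gate(1)] by simp
  qed (simp add: l)
  have "prov C (InPort G l) \<notin> Exit C Z - provset C G"
    using l by (auto simp: provset_def)
  moreover have "\<exists>l'\<in>iota C G. prov C (InPort G l) = prov C (InPort G l')"
    using l by blast
  ultimately show ?thesis
    unfolding glue_in_def by (simp only: if_False if_True some)
qed

lemma qbasis_agree_glue_in:
  assumes "b \<in> qbasis (iota C G)"
  shows "qbasis_agree (wires C Z) (Exit C Z) (glue_in C Z G c b) =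
    {a \<in> qbasis_agree (wires C Z) (Exit C Z - provset C G) c. in_part C G a = b}"
proof -
  have "(\<forall>p\<in>provset C G. a p = glue_in C Z G c b p) \<longleftrightarrow> in_part C G a = b" for a
    using assms glue_in_prov by (auto simp: provset_def in_part_def qbasis_def fun_eq_iff)
  moreover have "\<forall>p\<in>Exit C Z - provset C G. glue_in C Z G c b p = c p"
    by (simp add: glue_in_def)
  ultimately have "(\<forall>p\<in>Exit C Z. a p = glue_in C Z G c b p) \<longleftrightarrow>
      (\<forall>p\<in>Exit C Z - provset C G. a p = c p) \<and> in_part C G a = b" for a
    using provset_subset_Exit by blast
  then show ?thesis
    by (auto simp: qbasis_agree_def)
qed


lemma path_amplitude_extend:
  "path_amplitude C \<psi> (insert G Z) (\<lambda>p. if p \<in> out_ports C G then c p else a p) =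
    gateU C G (out_part C G c) (in_part C G a) * path_amplitude C \<psi> Z a"
proof -
  let ?a' = "\<lambda>p. if p \<in> out_ports C G then c p else a p"
  have "finite Z"
    using ready_gate(3) circuit_finite(2)[OF circuit] by (rule finite_subset)
  moreover have "out_part C G ?a' = out_part C G c"
    by (auto simp: out_part_def out_ports_def fun_eq_iff)
  moreover have "provset C G \<inter> out_ports C G = {}"
    using provset_subset_Exit Exit_subset_wires out_ports_disjoint_wires by blast
  then have "in_part C G ?a' = in_part C G a"
    by (auto simp: in_part_def provset_def fun_eq_iff)
  moreover have "path_amplitude C \<psi> Z ?a' = path_amplitude C \<psi> Z a"
    using out_ports_disjoint_wires by (intro path_amplitude_cong[OF circuit stage]) auto
  ultimately show ?thesis
    using ready_gate(2) by (simp add: path_amplitude_insert)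
qed

lemma path_sum_apply_gate: "path_sum C \<psi> (insert G Z) = apply_gate C Z G (path_sum C \<psi> Z)"
proof
  fix c
  show "path_sum C \<psi> (insert G Z) c = apply_gate C Z G (path_sum C \<psi> Z) c"
  proof (cases "c \<in> qbasis (Exit C (insert G Z))")
    case True
    define T where "T = qbasis_agree (wires C Z) (Exit C Z - provset C G) c"
    define U where "U = gateU C G (out_part C G c)"
    have "finite T"
      using finite_qbasis[OF finite_wires[OF circuit ready_gate(3)]]
      by (simp add: T_def qbasis_agree_def)
    have sum_b: "U b * path_sum C \<psi> Z (glue_in C Z G c b) =
        (\<Sum>a\<in>{a\<in>T. in_part C G a = b}. U (in_part C G a) * path_amplitude C \<psi> Z a)"
      if "b \<in> qbasis (iota C G)" for b
      using glue_in_qbasis qbasis_agree_glue_in[OF that]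
      by (simp add: path_sum_def T_def sum_distrib_left)
    have "apply_gate C Z G (path_sum C \<psi> Z) c =
        (\<Sum>b\<in>qbasis (iota C G). U b * path_sum C \<psi> Z (glue_in C Z G c b))"
      using True by (simp add: apply_gate_def U_def)
    also have "\<dots> = (\<Sum>b\<in>qbasis (iota C G).
        \<Sum>a\<in>{a\<in>T. in_part C G a = b}. U (in_part C G a) * path_amplitude C \<psi> Z a)"
      using sum_b by simp
    also have "\<dots> = (\<Sum>a\<in>T. U (in_part C G a) * path_amplitude C \<psi> Z a)"
      using circuit_finite(3)[OF circuit ready_gate(1)]
      by (intro sum.group \<open>finite T\<close> finite_qbasis) (auto simp: in_part_def qbasis_def)
    also have "\<dots> = (\<Sum>a\<in>T. path_amplitude C \<psi> (insert G Z)
        (\<lambda>p. if p \<in> out_ports C G then c p else a p))"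
      by (simp add: path_amplitude_extend U_def)
    also have "\<dots> = (\<Sum>a\<in>qbasis_agree (wires C (insert G Z)) (Exit C (insert G Z)) c.
        path_amplitude C \<psi> (insert G Z) a)"
      unfolding T_def wires_insert Exit_insert_ready
      using Exit_subset_wires out_ports_disjoint_wires
      by (intro sum.reindex_bij_betw bij_betw_qbasis_agree_extend) auto
    also have "\<dots> = path_sum C \<psi> (insert G Z) c"
      using True by (simp add: path_sum_def)
    finally show ?thesis ..
  qed (simp add: path_sum_def apply_gate_def)
qed

end

theorem mainTheorem5:
  fixes C :: "('n,'g,'l) circuit"
    and \<psi> :: "('n \<Rightarrow> bool) \<Rightarrow> complex"
  assumes "circuit C"
    and "\<psi> \<in> qvec (inputs C)"
  shows "\<exists>St :: 'g set \<Rightarrow> (('n,'g,'l) producer \<Rightarrow> bool) \<Rightarrow> complex.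
           ((\<forall>Z. stage C Z \<longrightarrow> St Z \<in> qvec (Exit C Z)) \<and>
            St {} = embed_input C \<psi> \<and>
            (\<forall>Z G. stage C Z \<longrightarrow> ready C Z G \<longrightarrow>
                St (insert G Z) = apply_gate C Z G (St Z))) \<and>
           (\<forall>St' :: 'g set \<Rightarrow> (('n,'g,'l) producer \<Rightarrow> bool) \<Rightarrow> complex.
              ((\<forall>Z. stage C Z \<longrightarrow> St' Z \<in> qvec (Exit C Z)) \<and>
               St' {} = embed_input C \<psi> \<and>
               (\<forall>Z G. stage C Z \<longrightarrow> ready C Z G \<longrightarrow>
                  St' (insert G Z) = apply_gate C Z G (St' Z)))
              \<longrightarrow> (\<forall>Z. stage C Z \<longrightarrow> St' Z = St Z))"
proof (intro exI conjI allI impI)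
  show "path_sum C \<psi> Z \<in> qvec (Exit C Z)" for Z
    by (rule path_sum_qvec)
  show "path_sum C \<psi> {} = embed_input C \<psi>"
    by (rule path_sum_empty)
  show "path_sum C \<psi> (insert G Z) = apply_gate C Z G (path_sum C \<psi> Z)"
    if "stage C Z" "ready C Z G" for Z G
    using assms(1) that by (rule path_sum_apply_gate)
  fix St' Z
  assume St': "(\<forall>Z. stage C Z \<longrightarrow> St' Z \<in> qvec (Exit C Z)) \<and>
      St' {} = embed_input C \<psi> \<and>
      (\<forall>Z G. stage C Z \<longrightarrow> ready C Z G \<longrightarrow> St' (insert G Z) = apply_gate C Z G (St' Z))"
  assume "stage C Z"
  with assms(1) show "St' Z = path_sum C \<psi> Z"
  proof (induction rule: stage_induct)
    case empty
    then show ?case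
      using St' by (simp add: path_sum_empty)
  next
    case (ready Z G)
    then show ?case
      using St' path_sum_apply_gate[OF assms(1)] by simp
  qed
qed

end
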